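(* Let $E^I_m(q;x,y)=\sum_{T\in\mathcal{T}^I_m}x^{l(T)}y^{u(T)}q^{\operatorname{inv}(T)}$ for $m\ge1$ and set $E^I_0(q;x,y)=x$. Then for all $n\ge1$, \[ E^I_{n+1}(q;x,y)=y\,E^I_n(q;x,y)+\sum_{k=0}^{n-2}q^{\,n-k-1}{n-1\brack k}_q\,E^I_{k+1}(q;x,y)\,E^I_{n-k-1}(q;x,y). \]
   Context: An increasing binary tree on $[m]=\{1,\dots,m\}$ is a rooted tree on $[m]$ with labels increasing along paths from the root, each vertex having at most one (distinguished) left child and at most one right child. $\mathcal{T}^I_m$ is the set of André I trees on $[m]$: increasing binary trees in which, for every vertex with at least one child, the maximum label of the left subtree is less than the maximum label of the right subtree (maximum of the empty tree $=0$). $l(T)$ is the number of leaves, $u(T)$ the number of vertices with exactly one child. An inversion of $T$ is a pair $(i,j)$ of vertices with $i>j$ such that either (1) $j$ belongs to the right subtree of some vertex $v$ on the path from the root to $i$ whose left child is on that path; or (2) $j$ is on the path from the root to $i$ and the left child of $j$ is on that path; $\operatorname{inv}(T)$ counts inversions. ${n\brack k}_q=\frac{(q;q)_n}{(q;q)_k(q;q)_{n-k}}$ for $0\le k\le n$, with $(q;q)_n=\prod_{i=1}^n(1-q^i)$. *)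

theory Defs
  imports Main "HOL-Library.Tree" "HOL-Computational_Algebra.Formal_Power_Series"
begin

fun increasing :: "nat tree \<Rightarrow> bool" where
  "increasing Leaf = True"
| "increasing (Node l v r) =
     ((\<forall>x \<in> set_tree l \<union> set_tree r. v < x) \<and> increasing l \<and> increasing r)"

definition maxlab :: "nat tree \<Rightarrow> nat" where
  "maxlab t = (if t = Leaf then 0 else Max (set_tree t))"

fun andre_cond :: "nat tree \<Rightarrow> bool" where
  "andre_cond Leaf = True"
| "andre_cond (Node l v r) =
     (((l \<noteq> Leaf \<or> r \<noteq> Leaf) \<longrightarrow> maxlab l < maxlab r) \<and> andre_cond l \<and> andre_cond r)"

definition inc_trees :: "nat \<Rightarrow> nat tree set" where
  "inc_trees m = {T. set_tree T = {1..m} \<and> distinct (inorder T) \<and> increasing T}"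

definition andreI_trees :: "nat \<Rightarrow> nat tree set" where
  "andreI_trees m = {T \<in> inc_trees m. andre_cond T}"

fun nleaves :: "nat tree \<Rightarrow> nat" where
  "nleaves Leaf = 0"
| "nleaves (Node l v r) = (if l = Leaf \<and> r = Leaf then 1 else nleaves l + nleaves r)"

fun nunary :: "nat tree \<Rightarrow> nat" where
  "nunary Leaf = 0"
| "nunary (Node l v r) = (if (l = Leaf) \<noteq> (r = Leaf) then 1 else 0) + nunary l + nunary r"

text \<open>At a vertex v whose left child lies on the path to i
  (i.e. i in the left subtree of v): condition (1) gives j in the right subtree of v,
  condition (2) gives j = v.  If i lies in the right subtree, v contributes nothing.\<close>
fun inv_pairs :: "nat tree \<Rightarrow> (nat \<times> nat) set" where
  "inv_pairs Leaf = {}"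
| "inv_pairs (Node l v r) =
     inv_pairs l \<union> inv_pairs r \<union>
     {(i, j). i \<in> set_tree l \<and> (j \<in> set_tree r \<or> j = v) \<and> i > j}"

definition inv :: "nat tree \<Rightarrow> nat" where
  "inv T = card (inv_pairs T)"

definition qpoch :: "'a::comm_ring_1 \<Rightarrow> nat \<Rightarrow> 'a" where
  "qpoch q n = (\<Prod>i = 1..n. 1 - q ^ i)"

definition qbinom :: "'a::idom_divide \<Rightarrow> nat \<Rightarrow> nat \<Rightarrow> 'a" where
  "qbinom q n k = qpoch q n div (qpoch q k * qpoch q (n - k))"

definition EI :: "nat \<Rightarrow> 'a::comm_semiring_1 \<Rightarrow> 'a \<Rightarrow> 'a \<Rightarrow> 'a" where
  "EI m q x y = (if m = 0 then x
     else (\<Sum>T \<in> andreI_trees m. x ^ nleaves T * y ^ nunary T * q ^ inv T))"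

end

(*
  In an Andre I tree on [n+1] the root is 1; its left and right subtrees carry
  label sets S and {2..n+1} - S, and the Andre condition at the root means
  exactly that n+1 lies in the right subtree, i.e. S is a subset of {2..n}.
  The generating function of Andre I trees on a label set A depends only on |A|,
  since order-preserving relabelling keeps leaves, unary vertices and inversions.
  For S empty the root is unary and contributes y.  Otherwise it contributes the
  inversions (i,1) for i in S and (i,j) with j < i, i in S, j in {2..n} - S, so the
  weight is q^(|S| + cross(S)) E_|S| E_(n-|S|).  Summing q^cross(S) over the
  j-subsets of {2..n} gives the Gaussian binomial [n-1, j]_q (split off the minimum),
  and the symmetry [n-1, j]_q = [n-1, n-1-j]_q puts the sum into the stated form.
*)

theory Submission
  imports Defs
begin

section \<open>Gaussian binomial coefficients\<close>

text \<open>The q-Pascal recursion gives the Gaussian binomial without division, so it makes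
  sense in any commutative semiring.\<close>

fun qchoose :: "'a::comm_semiring_1 \<Rightarrow> nat \<Rightarrow> nat \<Rightarrow> 'a" where
  "qchoose q n 0 = 1"
| "qchoose q 0 (Suc k) = 0"
| "qchoose q (Suc n) (Suc k) = qchoose q n k + q ^ Suc k * qchoose q n (Suc k)"

lemma qchoose_eq_0: "n < k \<Longrightarrow> qchoose q n k = 0"
  by (induction q n k rule: qchoose.induct) auto

lemma qpoch_0 [simp]: "qpoch q 0 = 1"
  by (simp add: qpoch_def)

lemma qpoch_Suc: "qpoch q (Suc n) = qpoch q n * (1 - q ^ Suc n)"
  unfolding qpoch_def by (simp add: prod.cl_ivl_Suc)

lemma qchoose_mult_qpoch:
  fixes q :: "'a::comm_ring_1"
  assumes "k \<le> n"
  shows "qchoose q n k * (qpoch q k * qpoch q (n - k)) = qpoch q n"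
  using assms
proof (induction q n k rule: qchoose.induct)
  case (1 q n)
  then show ?case by simp
next
  case (2 q k)
  then show ?case by simp
next
  case (3 q n k)
  show ?case
  proof (cases "k = n")
    case True
    then have "qchoose q n k * qpoch q n = qpoch q n"
      using "3.IH"(1) by (simp add: qpoch_def)
    then show ?thesis
      using True by (simp add: qchoose_eq_0 qpoch_Suc flip: mult.assoc)
  next
    case False
    with "3.prems" have "k < n" by simp
    then have n_k: "n - k = Suc (n - Suc k)" and pow: "q ^ Suc k * q ^ (n - k) = q ^ Suc n"
      by (simp, simp only: power_add[symmetric], simp)
    have "qchoose q (Suc n) (Suc k) * (qpoch q (Suc k) * qpoch q (Suc n - Suc k))
        = qchoose q n k * (qpoch q k * qpoch q (n - k)) * (1 - q ^ Suc k)
          + q ^ Suc k * (qchoose q n (Suc k) * (qpoch q (Suc k) * qpoch q (n - Suc k)))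
              * (1 - q ^ (n - k))"
      by (simp add: qpoch_Suc n_k algebra_simps)
    also have "\<dots> = qpoch q n * (1 - q ^ Suc k) + q ^ Suc k * qpoch q n * (1 - q ^ (n - k))"
      using "3.IH" \<open>k < n\<close> by simp
    also have "\<dots> = qpoch q n * (1 - q ^ Suc k * q ^ (n - k))"
      by (simp add: algebra_simps)
    also have "\<dots> = qpoch q (Suc n)"
      by (simp only: pow qpoch_Suc)
    finally show ?thesis .
  qed
qed

lemma qpoch_fps_X_nonzero: "qpoch (fps_X :: 'a::field fps) n \<noteq> 0"
proof -
  have "fps_nth (1 - fps_X ^ i :: 'a fps) 0 = 1" if "i \<ge> 1" for i
    using that by simp
  then have "(1 - fps_X ^ i :: 'a fps) \<noteq> 0" if "i \<ge> 1" for i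
    using that by (metis fps_zero_nth zero_neq_one)
  then show ?thesis
    unfolding qpoch_def by (auto simp: prod_zero_iff)
qed

lemma qbinom_fps_X_eq_qchoose:
  "k \<le> n \<Longrightarrow> qbinom (fps_X :: 'a::field fps) n k = qchoose fps_X n k"
  unfolding qbinom_def
  by (metis qchoose_mult_qpoch nonzero_mult_div_cancel_right mult_eq_0_iff qpoch_fps_X_nonzero)

lemma qbinom_symmetric: "k \<le> n \<Longrightarrow> qbinom q n (n - k) = qbinom q n k"
  unfolding qbinom_def by (simp add: mult.commute)

lemma qbinom_fps_X_eq_qchoose_diff:
  "k \<le> n \<Longrightarrow> qbinom (fps_X :: 'a::field fps) n k = qchoose fps_X n (n - k)"
  by (metis diff_le_self qbinom_fps_X_eq_qchoose qbinom_symmetric)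

section \<open>Inversions between two label sets\<close>

definition cross_inversions :: "nat set \<Rightarrow> nat set \<Rightarrow> nat" where
  "cross_inversions S R = card {(i, j). i \<in> S \<and> j \<in> R \<and> j < i}"

lemma cross_inversions_insert_min_left:
  "\<forall>j\<in>R. b < j \<Longrightarrow> cross_inversions (insert b S) R = cross_inversions S R"
  unfolding cross_inversions_def by (metis (lifting) insert_iff not_less_iff_gr_or_eq)

lemma cross_inversions_insert_min_right:
  assumes "\<forall>i\<in>S. b < i" "b \<notin> R" "finite S" "finite R"
  shows "cross_inversions S (insert b R) = cross_inversions S R + card S"
proof -
  let ?P = "{(i, j). i \<in> S \<and> j \<in> R \<and> j < i}"
  have "{(i, j). i \<in> S \<and> j \<in> insert b R \<and> j < i} = ?P \<union> (\<lambda>i. (i, b)) ` S"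
    using assms(1) by auto
  moreover have "finite ?P"
    by (rule finite_subset[of _ "S \<times> R"]) (use assms in auto)
  moreover have "?P \<inter> (\<lambda>i. (i, b)) ` S = {}"
    using assms(2) by auto
  moreover have "card ((\<lambda>i. (i, b)) ` S) = card S"
    by (rule card_image) (auto simp: inj_on_def)
  ultimately show ?thesis
    unfolding cross_inversions_def using assms(3) by (simp add: card_Un_disjoint)
qed

lemma sum_card_subsets_insert:
  assumes "finite A" "b \<notin> A"
  shows "(\<Sum>S | S \<subseteq> insert b A \<and> card S = Suc k. f S)
       = (\<Sum>S | S \<subseteq> A \<and> card S = Suc k. f S) + (\<Sum>S | S \<subseteq> A \<and> card S = k. f (insert b S))"
proof -
  let ?k_subsets = "{S. S \<subseteq> A \<and> card S = k}" and ?k_subsetsout = "{S. S \<subseteq> A \<and> card S = Suc k}"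
  have "{S. S \<subseteq> insert b A \<and> card S = Suc k} = ?k_subsetsout \<union> insert b ` ?k_subsets"
  proof (intro equalityI subsetI)
    fix S assume S: "S \<in> {S. S \<subseteq> insert b A \<and> card S = Suc k}"
    show "S \<in> ?k_subsetsout \<union> insert b ` ?k_subsets"
    proof (cases "b \<in> S")
      case True
      then have "S = insert b (S - {b})" and "S - {b} \<in> ?k_subsets"
        using S assms by (auto simp: finite_subset)
      then show ?thesis by blast
    qed (use S in auto)
  next
    fix S assume "S \<in> ?k_subsetsout \<union> insert b ` ?k_subsets"
    then consider "S \<in> ?k_subsetsout" | T where "T \<in> ?k_subsets" "S = insert b T"
      by blast
    then show "S \<in> {S. S \<subseteq> insert b A \<and> card S = Suc k}"
    proof cases
      case 2
      then have "finite T" "b \<notin> T"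
        using assms by (auto dest: finite_subset)
      with 2 show ?thesis by auto
    qed auto
  qed
  moreover have "inj_on (insert b) ?k_subsets"
    using assms(2) by (intro inj_onI) (metis insert_ident mem_Collect_eq subsetD)
  moreover have "?k_subsetsout \<inter> insert b ` ?k_subsets = {}"
    using assms(2) by auto
  ultimately show ?thesis
    using assms(1) by (simp add: sum.union_disjoint sum.reindex)
qed

lemma sum_subsets_cross_inversions:
  assumes "finite U"
  shows "(\<Sum>S | S \<subseteq> U \<and> card S = k. q ^ cross_inversions S (U - S)) = qchoose q (card U) k"
  using assms
proof (induction U arbitrary: k rule: finite_linorder_min_induct)
  case empty
  have subsets: "{S. S \<subseteq> {} \<and> card S = k} = (if k = 0 then {{}} else {})"
    by auto
  show ?case
    by (simp only: subsets) (cases k, simp_all add: cross_inversions_def)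
next
  case (insert b A)
  txt \<open>The new minimum \<open>b\<close> is below every label: it adds \<open>card S\<close> inversions when it
    lies outside \<open>S\<close> and none when it lies in \<open>S\<close>.\<close>
  then have "b \<notin> A" by blast
  show ?case
  proof (cases k)
    case 0
    then have "{S. S \<subseteq> insert b A \<and> card S = k} = {{}}"
      using insert.hyps(1) by auto (metis card_0_eq empty_iff finite_insert finite_subset)
    then show ?thesis
      using 0 by (simp add: cross_inversions_def)
  next
    case (Suc k')
    have avoiding_b: "q ^ cross_inversions S (insert b A - S) = q ^ Suc k' * q ^ cross_inversions S (A - S)"
      if "S \<subseteq> A" "card S = Suc k'" for S
    proof -
      have "insert b A - S = insert b (A - S)"
        using that \<open>b \<notin> A\<close> by auto
      then show ?thesis
        using that insert.hyps \<open>b \<notin> A\<close>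
        by (simp add: cross_inversions_insert_min_right finite_subset subset_iff power_add mult_ac)
    qed
    have containing_b: "cross_inversions (insert b S) (A - insert b S) = cross_inversions S (A - S)"
      if "S \<subseteq> A" for S
    proof -
      have "A - insert b S = A - S"
        using \<open>b \<notin> A\<close> by auto
      then show ?thesis
        using insert.hyps(2) by (simp add: cross_inversions_insert_min_left)
    qed
    have "(\<Sum>S | S \<subseteq> insert b A \<and> card S = k. q ^ cross_inversions S (insert b A - S))
        = q ^ Suc k' * (\<Sum>S | S \<subseteq> A \<and> card S = Suc k'. q ^ cross_inversions S (A - S))
          + (\<Sum>S | S \<subseteq> A \<and> card S = k'. q ^ cross_inversions S (A - S))"
      unfolding Suc sum_card_subsets_insert[OF insert.hyps(1) \<open>b \<notin> A\<close>]
      by (simp add: avoiding_b containing_b sum_distrib_left)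
    then show ?thesis
      using Suc insert.IH insert.hyps(1) \<open>b \<notin> A\<close> by (simp add: add.commute)
  qed
qed

lemma Max_image_strict_mono_on:
  assumes "strict_mono_on X f" "finite X" "X \<noteq> {}"
  shows "Max (f ` X) = f (Max X)"
proof (rule Max_eqI)
  fix y assume "y \<in> f ` X"
  then obtain u where "u \<in> X" "y = f u"
    by blast
  with assms show "y \<le> f (Max X)"
    by (simp add: strict_mono_on_leD)
qed (use assms in auto)

lemma strict_mono_on_inv_into:
  fixes f :: "'a::linorder \<Rightarrow> 'b::linorder"
  assumes "strict_mono_on A f"
  shows "strict_mono_on (f ` A) (inv_into A f)"
proof (rule strict_mono_onI)
  fix b b' assume "b \<in> f ` A" "b' \<in> f ` A" "b < b'"
  then obtain a a' where "a \<in> A" "a' \<in> A" "b = f a" "b' = f a'" "f a < f a'"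
    by blast
  with assms show "inv_into A f b < inv_into A f b'"
    by (simp add: strict_mono_on_less inv_into_f_f strict_mono_on_imp_inj_on)
qed

lemma strict_mono_enumeration:
  assumes "finite (A :: 'a::linorder set)"
  obtains f where "strict_mono_on {1..card A} f" "f ` {1..card A} = A"
proof -
  obtain xs where xs: "sorted_wrt (<) xs" "set xs = A" "length xs = card A"
    using finite_set_strict_sorted[OF assms] by blast
  let ?f = "\<lambda>i. xs ! (i - 1)"
  have "strict_mono_on {1..card A} ?f"
    using xs by (intro strict_mono_onI) (simp add: sorted_wrt_nth_less)
  moreover have "?f ` {1..card A} = A"
  proof -
    have "?f ` {1..card A} = nth xs ` {0..<length xs}"
      unfolding xs(3)[symmetric] image_Suc_lessThan[symmetric] lessThan_atLeast0 image_image
      by simp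
    also have "\<dots> = A"
      using xs(2) by (simp add: nth_image)
    finally show ?thesis .
  qed
  ultimately show ?thesis
    using that by blast
qed

section \<open>Andre I trees on an arbitrary label set\<close>

definition andre_trees :: "nat set \<Rightarrow> nat tree set" where
  "andre_trees A = {T. set_tree T = A \<and> distinct (inorder T) \<and> increasing T \<and> andre_cond T}"

definition tree_weight :: "'a \<Rightarrow> 'a \<Rightarrow> 'a \<Rightarrow> nat tree \<Rightarrow> 'a::comm_semiring_1" where
  "tree_weight q x y T = x ^ nleaves T * y ^ nunary T * q ^ Defs.inv T"

definition EI_on :: "'a \<Rightarrow> 'a \<Rightarrow> 'a \<Rightarrow> nat set \<Rightarrow> 'a::comm_semiring_1" where
  "EI_on q x y A = (\<Sum>T \<in> andre_trees A. tree_weight q x y T)"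

lemma andre_trees_empty [simp]: "andre_trees {} = {Leaf}"
  by (auto simp: andre_trees_def)

lemma finite_trees_size_le:
  assumes "finite A"
  shows "finite {T. set_tree T \<subseteq> A \<and> size T \<le> n}"
proof (induction n)
  case 0
  then show ?case by simp
next
  case (Suc n)
  let ?small = "{T. set_tree T \<subseteq> A \<and> size T \<le> n}"
  have "{T. set_tree T \<subseteq> A \<and> size T \<le> Suc n}
      \<subseteq> insert Leaf ((\<lambda>(l, v, r). Node l v r) ` (?small \<times> A \<times> ?small))"
  proof
    fix T assume T: "T \<in> {T. set_tree T \<subseteq> A \<and> size T \<le> Suc n}"
    show "T \<in> insert Leaf ((\<lambda>(l, v, r). Node l v r) ` (?small \<times> A \<times> ?small))"
    proof (cases T)
      case (Node l v r)
      with T have "(l, v, r) \<in> ?small \<times> A \<times> ?small"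
        by auto
      with Node show ?thesis
        by force
    qed simp
  qed
  moreover have "finite (insert Leaf ((\<lambda>(l, v, r). Node l v r) ` (?small \<times> A \<times> ?small)))"
    using Suc assms by simp
  ultimately show ?case
    by (rule finite_subset)
qed

lemma finite_andre_trees: "finite A \<Longrightarrow> finite (andre_trees A)"
proof -
  assume "finite A"
  have "size T = card A" if "T \<in> andre_trees A" for T
    using that distinct_card[of "inorder T"] by (simp add: andre_trees_def)
  then have "andre_trees A \<subseteq> {T. set_tree T \<subseteq> A \<and> size T \<le> card A}"
    by (auto simp: andre_trees_def)
  then show ?thesis
    using finite_trees_size_le[OF \<open>finite A\<close>] by (rule finite_subset)
qed

lemma EI_eq_EI_on: "m \<noteq> 0 \<Longrightarrow> EI m q x y = EI_on q x y {1..m}"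
  by (simp add: EI_def EI_on_def tree_weight_def andreI_trees_def inc_trees_def andre_trees_def
      Collect_conj_eq Int_assoc)

lemma map_tree_eq_Leaf_iff [simp]: "map_tree f t = Leaf \<longleftrightarrow> t = Leaf"
  by (cases t) auto

lemma nleaves_map_tree [simp]: "nleaves (map_tree f T) = nleaves T"
  by (induction T) auto

lemma nunary_map_tree [simp]: "nunary (map_tree f T) = nunary T"
  by (induction T) auto

lemma increasing_map_tree_iff:
  "strict_mono_on (set_tree T) f \<Longrightarrow> increasing (map_tree f T) \<longleftrightarrow> increasing T"
proof (induction T)
  case (Node l v r)
  have "f v < f u \<longleftrightarrow> v < u" if "u \<in> set_tree l \<union> set_tree r" for u
    using Node.prems that by (intro strict_mono_on_less) auto
  moreover have "strict_mono_on (set_tree l) f" "strict_mono_on (set_tree r) f"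
    using Node.prems by (auto intro: monotone_on_subset)
  ultimately show ?case
    using Node.IH by (auto simp: tree.set_map)
qed simp

lemma maxlab_Leaf [simp]: "maxlab Leaf = 0"
  by (simp add: maxlab_def)

lemma maxlab_in_set_tree: "T \<noteq> Leaf \<Longrightarrow> maxlab T \<in> set_tree T"
  by (simp add: maxlab_def)

lemma maxlab_le_iff: "maxlab T \<le> b \<longleftrightarrow> (\<forall>a \<in> set_tree T. a \<le> b)"
  by (simp add: maxlab_def)

lemma le_maxlab: "a \<in> set_tree T \<Longrightarrow> a \<le> maxlab T"
  by (auto simp: maxlab_def)

lemma maxlab_map_tree:
  "strict_mono_on (set_tree T) f \<Longrightarrow> T \<noteq> Leaf \<Longrightarrow> maxlab (map_tree f T) = f (maxlab T)"
  by (simp add: maxlab_def tree.set_map Max_image_strict_mono_on)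

text \<open>Label 0 must be avoided because the empty tree has maximum label 0.\<close>

lemma andre_cond_map_tree_iff:
  assumes "strict_mono_on (set_tree T) f" "0 \<notin> set_tree T" "0 \<notin> f ` set_tree T"
  shows "andre_cond (map_tree f T) \<longleftrightarrow> andre_cond T"
  using assms
proof (induction T)
  case (Node l v r)
  have mono: "strict_mono_on (set_tree l) f" "strict_mono_on (set_tree r) f"
    using Node.prems(1) by (auto intro: monotone_on_subset)
  have "maxlab (map_tree f l) < maxlab (map_tree f r) \<longleftrightarrow> maxlab l < maxlab r"
    if "r \<noteq> Leaf"
  proof (cases "l = Leaf")
    case True
    have "maxlab r \<in> set_tree r"
      using that by (rule maxlab_in_set_tree)
    then have "maxlab r \<noteq> 0" "f (maxlab r) \<noteq> 0"
      using Node.prems(2,3) by force+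
    then show ?thesis
      using True that mono by (simp add: maxlab_map_tree)
  next
    case False
    then have "maxlab l \<in> set_tree l" "maxlab r \<in> set_tree r"
      using that by (simp_all add: maxlab_in_set_tree)
    then show ?thesis
      using False that Node.prems(1) mono by (simp add: maxlab_map_tree strict_mono_on_less)
  qed
  then show ?case
    using Node mono by (cases "r = Leaf") auto
qed simp

lemma inv_pairs_subset: "inv_pairs T \<subseteq> set_tree T \<times> set_tree T"
  by (induction T) auto

lemma inv_pairs_map_tree:
  "strict_mono_on (set_tree T) f \<Longrightarrow> inv_pairs (map_tree f T) = map_prod f f ` inv_pairs T"
proof (induction T)
  case (Node l v r)
  let ?root = "\<lambda>l v r. {(i, j). i \<in> set_tree l \<and> (j \<in> set_tree r \<or> j = v) \<and> j < i}"
  have "?root (map_tree f l) (f v) (map_tree f r) = map_prod f f ` ?root l v r"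
    using strict_mono_on_less[OF Node.prems] by (auto simp: tree.set_map image_iff)
  moreover have "strict_mono_on (set_tree l) f" "strict_mono_on (set_tree r) f"
    using Node.prems by (auto intro: monotone_on_subset)
  ultimately show ?case
    using Node.IH by (simp add: image_Un)
qed simp

lemma inv_map_tree:
  assumes "strict_mono_on (set_tree T) f"
  shows "Defs.inv (map_tree f T) = Defs.inv T"
proof -
  have "inj_on (map_prod f f) (set_tree T \<times> set_tree T)"
    by (intro map_prod_inj_on strict_mono_on_imp_inj_on assms)
  then have "inj_on (map_prod f f) (inv_pairs T)"
    using inv_pairs_subset by (rule inj_on_subset)
  then show ?thesis
    unfolding Defs.inv_def inv_pairs_map_tree[OF assms] by (rule card_image)
qed

lemma tree_weight_map_tree:
  "strict_mono_on (set_tree T) f \<Longrightarrow> tree_weight q x y (map_tree f T) = tree_weight q x y T"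
  by (simp add: tree_weight_def inv_map_tree)

lemma map_tree_in_andre_trees:
  assumes "strict_mono_on A f" "0 \<notin> A" "0 \<notin> f ` A" "T \<in> andre_trees A"
  shows "map_tree f T \<in> andre_trees (f ` A)"
  using assms strict_mono_on_imp_inj_on[OF assms(1)]
  by (auto simp: andre_trees_def tree.set_map inorder_map distinct_map
      increasing_map_tree_iff andre_cond_map_tree_iff)

lemma EI_on_image:
  assumes "strict_mono_on A f" "0 \<notin> A" "0 \<notin> f ` A"
  shows "EI_on q x y (f ` A) = EI_on q x y A"
proof -
  let ?g = "inv_into A f"
  have inj: "inj_on f A"
    using assms(1) by (rule strict_mono_on_imp_inj_on)
  have "bij_betw (map_tree f) (andre_trees A) (andre_trees (f ` A))"
  proof (rule bij_betw_byWitness[where f' = "map_tree ?g"])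
    show "\<forall>T\<in>andre_trees A. map_tree ?g (map_tree f T) = T"
      using inj by (auto simp: andre_trees_def tree.map_comp intro!: tree.map_ident_strong)
    show "\<forall>T\<in>andre_trees (f ` A). map_tree f (map_tree ?g T) = T"
      by (auto simp: andre_trees_def tree.map_comp f_inv_into_f intro!: tree.map_ident_strong)
    show "map_tree f ` andre_trees A \<subseteq> andre_trees (f ` A)"
      using map_tree_in_andre_trees[OF assms] by blast
    have "?g ` f ` A = A"
      using inj by (simp add: inv_into_image_cancel)
    then show "map_tree ?g ` andre_trees (f ` A) \<subseteq> andre_trees A"
      using map_tree_in_andre_trees[OF strict_mono_on_inv_into[OF assms(1)] assms(3)] assms(2)
      by auto
  qed
  then have "EI_on q x y (f ` A) = (\<Sum>T\<in>andre_trees A. tree_weight q x y (map_tree f T))"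
    unfolding EI_on_def by (rule sum.reindex_bij_betw[symmetric])
  also have "\<dots> = EI_on q x y A"
    unfolding EI_on_def using assms(1)
    by (intro sum.cong refl) (auto simp: andre_trees_def tree_weight_map_tree)
  finally show ?thesis .
qed

lemma EI_on_eq_EI:
  assumes "finite A" "A \<noteq> {}" "0 \<notin> A"
  shows "EI_on q x y A = EI (card A) q x y"
proof -
  obtain f where "strict_mono_on {1..card A} f" "f ` {1..card A} = A"
    using strict_mono_enumeration[OF assms(1)] .
  then have "EI_on q x y A = EI_on q x y {1..card A}"
    using EI_on_image[of "{1..card A}" f] assms(3) by auto
  also have "\<dots> = EI (card A) q x y"
    using assms(1,2) by (simp add: EI_eq_EI_on)
  finally show ?thesis .
qed

section \<open>Decomposition at the root\<close>

text \<open>The Andre condition at the root says exactly that the largest label lies in the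
  right subtree.\<close>

lemma Node_1_in_andre_trees_iff:
  assumes "n \<ge> 1"
  shows "Node L 1 R \<in> andre_trees {1..Suc n} \<longleftrightarrow>
    (\<exists>S \<subseteq> {2..n}. L \<in> andre_trees S \<and> R \<in> andre_trees ({2..Suc n} - S))"
proof
  assume T: "Node L 1 R \<in> andre_trees {1..Suc n}"
  then have "{1..Suc n} = insert 1 (set_tree L \<union> set_tree R)" "1 \<notin> set_tree L \<union> set_tree R"
    and disjoint: "set_tree L \<inter> set_tree R = {}"
    by (auto simp: andre_trees_def)
  moreover have "{2..Suc n} = {1..Suc n} - {1}"
    by auto
  ultimately have labels: "set_tree L \<union> set_tree R = {2..Suc n}"
    by blast
  have top_not_in_L: "Suc n \<notin> set_tree L"
  proof
    assume "Suc n \<in> set_tree L"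
    then have "Suc n \<le> maxlab L" "L \<noteq> Leaf"
      by (auto simp: le_maxlab)
    moreover have "maxlab R \<le> Suc n"
      using labels by (auto simp: maxlab_le_iff)
    ultimately show False
      using T by (auto simp: andre_trees_def)
  qed
  have "{2..Suc n} - {Suc n} = {2..n}"
    by auto
  then have "set_tree L \<subseteq> {2..n}" "set_tree R = {2..Suc n} - set_tree L"
    using labels disjoint top_not_in_L by blast+
  then show "\<exists>S \<subseteq> {2..n}. L \<in> andre_trees S \<and> R \<in> andre_trees ({2..Suc n} - S)"
    using T by (auto simp: andre_trees_def)
next
  assume "\<exists>S \<subseteq> {2..n}. L \<in> andre_trees S \<and> R \<in> andre_trees ({2..Suc n} - S)"
  then obtain S where S: "S \<subseteq> {2..n}" "L \<in> andre_trees S" "R \<in> andre_trees ({2..Suc n} - S)"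
    by blast
  then have "Suc n \<in> set_tree R"
    using assms by (auto simp: andre_trees_def)
  then have "R \<noteq> Leaf"
    by auto
  have "maxlab L \<le> n"
    using S by (auto simp: andre_trees_def maxlab_le_iff)
  moreover have "Suc n \<le> maxlab R"
    using \<open>Suc n \<in> set_tree R\<close> by (rule le_maxlab)
  ultimately have "maxlab L < maxlab R"
    by simp
  with S \<open>R \<noteq> Leaf\<close> show "Node L 1 R \<in> andre_trees {1..Suc n}"
    by (auto simp: andre_trees_def)
qed

lemma andre_trees_root:
  assumes "T \<in> andre_trees {1..m}" "m \<ge> 1"
  obtains L R where "T = Node L 1 R"
proof (cases T)
  case (Node L v R)
  have "1 \<in> set_tree T" "\<forall>a \<in> set_tree T. a \<ge> 1"
    using assms by (auto simp: andre_trees_def)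
  then have "v = 1"
    using assms(1) Node by (auto simp: andre_trees_def)
  with Node that show ?thesis
    by blast
qed (use assms in \<open>auto simp: andre_trees_def\<close>)

lemma andre_trees_Suc_eq:
  assumes "n \<ge> 1"
  shows "andre_trees {1..Suc n} = (\<lambda>(L, R). Node L 1 R) `
    (\<Union>S \<in> Pow {2..n}. andre_trees S \<times> andre_trees ({2..Suc n} - S))"
proof (intro equalityI subsetI)
  fix T assume T: "T \<in> andre_trees {1..Suc n}"
  then obtain L R where "T = Node L 1 R"
    by (rule andre_trees_root) simp
  obtain S where "S \<subseteq> {2..n}" "L \<in> andre_trees S" "R \<in> andre_trees ({2..Suc n} - S)"
    using T Node_1_in_andre_trees_iff[OF assms] \<open>T = Node L 1 R\<close> by blast
  then have "(L, R) \<in> (\<Union>S \<in> Pow {2..n}. andre_trees S \<times> andre_trees ({2..Suc n} - S))"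
    by blast
  then show "T \<in> (\<lambda>(L, R). Node L 1 R) ` (\<Union>S \<in> Pow {2..n}. andre_trees S \<times> andre_trees ({2..Suc n} - S))"
    unfolding \<open>T = Node L 1 R\<close> by (rule rev_image_eqI) simp
qed (use Node_1_in_andre_trees_iff[OF assms] in auto)

lemma inv_Node:
  assumes "distinct (inorder (Node L v R))"
  shows "Defs.inv (Node L v R) = Defs.inv L + Defs.inv R
    + card {(i, j). i \<in> set_tree L \<and> (j \<in> set_tree R \<or> j = v) \<and> j < i}"
proof -
  let ?root = "{(i, j). i \<in> set_tree L \<and> (j \<in> set_tree R \<or> j = v) \<and> j < i}"
  have "finite ?root"
    by (rule finite_subset[of _ "set_tree L \<times> insert v (set_tree R)"]) auto
  moreover have "finite (inv_pairs T)" for T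
    using inv_pairs_subset by (rule finite_subset) simp
  moreover have "inv_pairs L \<inter> inv_pairs R = {}" "(inv_pairs L \<union> inv_pairs R) \<inter> ?root = {}"
    using assms inv_pairs_subset[of L] inv_pairs_subset[of R] by auto
  ultimately show ?thesis
    by (simp add: Defs.inv_def card_Un_disjoint)
qed

lemma tree_weight_Node_Leaf:
  "R \<noteq> Leaf \<Longrightarrow> tree_weight q x y (Node Leaf v R) = y * tree_weight q x y R"
  by (simp add: tree_weight_def Defs.inv_def mult_ac)

lemma tree_weight_Node:
  assumes "L \<noteq> Leaf" "R \<noteq> Leaf" "distinct (inorder (Node L v R))"
  shows "tree_weight q x y (Node L v R) =
    q ^ card {(i, j). i \<in> set_tree L \<and> (j \<in> set_tree R \<or> j = v) \<and> j < i}
    * tree_weight q x y L * tree_weight q x y R"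
  using assms by (simp add: tree_weight_def inv_Node power_add mult_ac)

text \<open>The largest label \<open>Suc n\<close> exceeds every label of \<open>S\<close>, so it never occurs in a root
  inversion.\<close>

lemma card_root_inversions:
  assumes "S \<subseteq> {2..n}"
  shows "card {(i, j). i \<in> S \<and> (j \<in> {2..Suc n} - S \<or> j = 1) \<and> j < i}
    = card S + cross_inversions S ({2..n} - S)"
proof -
  have "{(i, j). i \<in> S \<and> (j \<in> {2..Suc n} - S \<or> j = 1) \<and> j < i}
      = {(i, j). i \<in> S \<and> j \<in> insert 1 ({2..n} - S) \<and> j < i}"
    using assms by auto
  moreover have "cross_inversions S (insert 1 ({2..n} - S)) = cross_inversions S ({2..n} - S) + card S"
    by (rule cross_inversions_insert_min_right) (use assms finite_subset[OF assms] in auto)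
  ultimately show ?thesis
    by (simp add: cross_inversions_def)
qed

lemma EI_on_Suc_eq_sum_subsets:
  assumes "n \<ge> 1"
  shows "EI_on q x y {1..Suc n} = (\<Sum>S \<in> Pow {2..n}.
    \<Sum>(L, R) \<in> andre_trees S \<times> andre_trees ({2..Suc n} - S). tree_weight q x y (Node L 1 R))"
proof -
  let ?pairs = "\<lambda>S. andre_trees S \<times> andre_trees ({2..Suc n} - S)"
  have "inj_on (\<lambda>(L, R). Node L 1 R) (\<Union>S \<in> Pow {2..n}. ?pairs S)"
    by (auto simp: inj_on_def)
  then have "EI_on q x y {1..Suc n} = (\<Sum>(L, R) \<in> (\<Union>S \<in> Pow {2..n}. ?pairs S). tree_weight q x y (Node L 1 R))"
    unfolding EI_on_def andre_trees_Suc_eq[OF assms]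
    by (rule sum.reindex_cong[OF _ refl]) auto
  also have "\<dots> = (\<Sum>S \<in> Pow {2..n}. \<Sum>(L, R) \<in> ?pairs S. tree_weight q x y (Node L 1 R))"
  proof (rule sum.UNION_disjoint)
    show "\<forall>S \<in> Pow {2..n}. finite (?pairs S)"
      by (auto simp: finite_andre_trees finite_subset)
    show "\<forall>S \<in> Pow {2..n}. \<forall>S' \<in> Pow {2..n}. S \<noteq> S' \<longrightarrow> ?pairs S \<inter> ?pairs S' = {}"
      by (auto simp: andre_trees_def)
  qed simp
  finally show ?thesis .
qed

lemma sum_weight_Node_1_Leaf:
  assumes "n \<ge> 1"
  shows "(\<Sum>R \<in> andre_trees {2..Suc n}. tree_weight q x y (Node Leaf 1 R)) = y * EI n q x y"
proof -
  have "(\<Sum>R \<in> andre_trees {2..Suc n}. tree_weight q x y (Node Leaf 1 R))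
      = (\<Sum>R \<in> andre_trees {2..Suc n}. y * tree_weight q x y R)"
  proof (intro sum.cong refl)
    fix R assume "R \<in> andre_trees {2..Suc n}"
    then have "R \<noteq> Leaf"
      using assms by (auto simp: andre_trees_def)
    then show "tree_weight q x y (Node Leaf 1 R) = y * tree_weight q x y R"
      by (rule tree_weight_Node_Leaf)
  qed
  also have "\<dots> = y * EI_on q x y {2..Suc n}"
    by (simp add: EI_on_def sum_distrib_left)
  also have "\<dots> = y * EI n q x y"
    using assms by (simp add: EI_on_eq_EI)
  finally show ?thesis .
qed

lemma tree_weight_Node_1:
  assumes "n \<ge> 1" "S \<subseteq> {2..n}" "S \<noteq> {}"
    and "L \<in> andre_trees S" "R \<in> andre_trees ({2..Suc n} - S)"
  shows "tree_weight q x y (Node L 1 R)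
    = q ^ (card S + cross_inversions S ({2..n} - S)) * tree_weight q x y L * tree_weight q x y R"
proof -
  have labels: "set_tree L = S" "set_tree R = {2..Suc n} - S"
    using assms(4,5) by (simp_all add: andre_trees_def)
  then have "Suc n \<in> set_tree R"
    using assms(1,2) by (auto simp: subset_iff)
  then have "R \<noteq> Leaf"
    by auto
  moreover have "L \<noteq> Leaf"
    using labels(1) assms(3) by auto
  moreover have "Node L 1 R \<in> andre_trees {1..Suc n}"
    using Node_1_in_andre_trees_iff[OF assms(1)] assms(2,4,5) by blast
  then have "distinct (inorder (Node L 1 R))"
    by (simp add: andre_trees_def)
  ultimately show ?thesis
    using card_root_inversions[OF assms(2)] labels by (simp add: tree_weight_Node)
qed

lemma sum_weight_Node_1:
  assumes "n \<ge> 1" "S \<subseteq> {2..n}" "S \<noteq> {}"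
  shows "(\<Sum>(L, R) \<in> andre_trees S \<times> andre_trees ({2..Suc n} - S). tree_weight q x y (Node L 1 R))
    = q ^ (card S + cross_inversions S ({2..n} - S)) * EI (card S) q x y * EI (n - card S) q x y"
proof -
  let ?c = "q ^ (card S + cross_inversions S ({2..n} - S))"
  have "(\<Sum>(L, R) \<in> andre_trees S \<times> andre_trees ({2..Suc n} - S). tree_weight q x y (Node L 1 R))
      = (\<Sum>(L, R) \<in> andre_trees S \<times> andre_trees ({2..Suc n} - S).
          ?c * tree_weight q x y L * tree_weight q x y R)"
    using tree_weight_Node_1[OF assms] by (auto intro!: sum.cong)
  also have "\<dots> = ?c * (\<Sum>(L, R) \<in> andre_trees S \<times> andre_trees ({2..Suc n} - S).
      tree_weight q x y L * tree_weight q x y R)"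
    by (simp add: sum_distrib_left case_prod_beta' mult.assoc)
  also have "(\<Sum>(L, R) \<in> andre_trees S \<times> andre_trees ({2..Suc n} - S).
      tree_weight q x y L * tree_weight q x y R) = EI_on q x y S * EI_on q x y ({2..Suc n} - S)"
    by (simp only: EI_on_def sum_product sum.cartesian_product)
  also have "EI_on q x y S = EI (card S) q x y"
    using assms(2,3) finite_subset[OF assms(2)] by (intro EI_on_eq_EI) auto
  also have "EI_on q x y ({2..Suc n} - S) = EI (n - card S) q x y"
  proof -
    have "Suc n \<in> {2..Suc n} - S"
      using assms(1,2) by (auto simp: subset_iff)
    then have "{2..Suc n} - S \<noteq> {}"
      by blast
    moreover have "card ({2..Suc n} - S) = n - card S"
      using assms(2) finite_subset[OF assms(2)] by (subst card_Diff_subset) auto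
    ultimately show ?thesis
      using EI_on_eq_EI[of "{2..Suc n} - S"] by simp
  qed
  finally show ?thesis
    by (simp only: mult.assoc)
qed

lemma EI_Suc_eq_sum_subsets:
  assumes "n \<ge> 1"
  shows "EI (Suc n) q x y = y * EI n q x y + (\<Sum>S \<in> Pow {2..n} - {{}}.
    q ^ (card S + cross_inversions S ({2..n} - S)) * EI (card S) q x y * EI (n - card S) q x y)"
proof -
  let ?pairs_sum = "\<lambda>S. \<Sum>(L, R) \<in> andre_trees S \<times> andre_trees ({2..Suc n} - S).
    tree_weight q x y (Node L 1 R)"
  have "EI (Suc n) q x y = (\<Sum>S \<in> Pow {2..n}. ?pairs_sum S)"
    using EI_on_Suc_eq_sum_subsets[OF assms] by (simp add: EI_eq_EI_on)
  also have "\<dots> = ?pairs_sum {} + (\<Sum>S \<in> Pow {2..n} - {{}}. ?pairs_sum S)"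
    by (rule sum.remove) auto
  also have "?pairs_sum {} = y * EI n q x y"
    using sum_weight_Node_1_Leaf[OF assms] by (simp flip: sum.cartesian_product)
  also have "(\<Sum>S \<in> Pow {2..n} - {{}}. ?pairs_sum S) = (\<Sum>S \<in> Pow {2..n} - {{}}.
      q ^ (card S + cross_inversions S ({2..n} - S)) * EI (card S) q x y * EI (n - card S) q x y)"
    using assms by (intro sum.cong refl sum_weight_Node_1) auto
  finally show ?thesis .
qed

lemma EI_Suc_eq_sum_qchoose:
  assumes "n \<ge> 1"
  shows "EI (Suc n) q x y = y * EI n q x y
    + (\<Sum>j = 1..n - 1. q ^ j * qchoose q (n - 1) j * EI j q x y * EI (n - j) q x y)"
proof -
  let ?term = "\<lambda>S. q ^ (card S + cross_inversions S ({2..n} - S)) * EI (card S) q x y * EI (n - card S) q x y"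
  have "card S \<in> {1..n - 1}" if "S \<subseteq> {2..n}" "S \<noteq> {}" for S
    using that finite_subset[OF that(1)] card_mono[OF _ that(1)] by (auto simp: Suc_le_eq card_gt_0_iff)
  then have card_range: "card ` (Pow {2..n} - {{}}) \<subseteq> {1..n - 1}"
    by blast
  have "EI (Suc n) q x y = y * EI n q x y + (\<Sum>S \<in> Pow {2..n} - {{}}. ?term S)"
    by (rule EI_Suc_eq_sum_subsets[OF assms])
  also have "(\<Sum>S \<in> Pow {2..n} - {{}}. ?term S)
      = (\<Sum>j = 1..n - 1. \<Sum>S | S \<in> Pow {2..n} - {{}} \<and> card S = j. ?term S)"
    using card_range by (intro sum.group[symmetric]) auto
  also have "\<dots> = (\<Sum>j = 1..n - 1. q ^ j
      * (\<Sum>S | S \<subseteq> {2..n} \<and> card S = j. q ^ cross_inversions S ({2..n} - S))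
      * EI j q x y * EI (n - j) q x y)"
  proof (rule sum.cong[OF refl])
    fix j assume "j \<in> {1..n - 1}"
    then have "{S. S \<in> Pow {2..n} - {{}} \<and> card S = j} = {S. S \<subseteq> {2..n} \<and> card S = j}"
      by auto
    then show "(\<Sum>S | S \<in> Pow {2..n} - {{}} \<and> card S = j. ?term S) = q ^ j
      * (\<Sum>S | S \<subseteq> {2..n} \<and> card S = j. q ^ cross_inversions S ({2..n} - S))
      * EI j q x y * EI (n - j) q x y"
      by (simp add: sum_distrib_left power_add mult_ac)
  qed
  also have "\<dots> = (\<Sum>j = 1..n - 1. q ^ j * qchoose q (n - 1) j * EI j q x y * EI (n - j) q x y)"
    by (simp add: sum_subsets_cross_inversions)
  finally show ?thesis .
qed

theorem theorem6p8:
  fixes x y :: "'a::field fps" and n :: nat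
  assumes "n \<ge> 1"
  shows "EI (Suc n) fps_X x y =
           y * EI n fps_X x y
           + (\<Sum>k < n - 1. fps_X ^ (n - k - 1) * qbinom fps_X (n - 1) k
                 * EI (k + 1) fps_X x y * EI (n - k - 1) fps_X x y)"
proof -
  have "EI (Suc n) fps_X x y = y * EI n fps_X x y + (\<Sum>j = 1..n - 1.
      fps_X ^ j * qchoose fps_X (n - 1) j * EI j fps_X x y * EI (n - j) fps_X x y)"
    by (rule EI_Suc_eq_sum_qchoose[OF assms])
  also have "(\<Sum>j = 1..n - 1. fps_X ^ j * qchoose fps_X (n - 1) j * EI j fps_X x y * EI (n - j) fps_X x y)
      = (\<Sum>k < n - 1. fps_X ^ (n - k - 1) * qbinom fps_X (n - 1) k
          * EI (k + 1) fps_X x y * EI (n - k - 1) fps_X x y)"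
    by (rule sum.reindex_bij_witness[where i = "\<lambda>k. n - 1 - k" and j = "\<lambda>j. n - 1 - j"])
      (auto simp: qbinom_fps_X_eq_qchoose_diff Suc_diff_Suc mult_ac)
  finally show ?thesis .
qed

end
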